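(* Assume the setting below and suppose $\tau\le0$ and $|x_k^{(1)}|>a$. Define $r_k=\lceil\log_2(|x_k^{(1)}|/a)\rceil$. Then (with probability one) the step returned by the bracketing line search at iteration $k$ is $t_k=2^{r_k}$.
   Context: Let $n\ge2$, $a\ge\sqrt{n-1}$, $f(x)=a|x^{(1)}|+\sum_{i=2}^n x^{(i)}$ on $\mathbb{R}^n$ ($x^{(i)}$ the $i$-th coordinate), $0<c_1<c_2<1$, and $\tau=c_1+\frac{(n-1)(c_1-1)}{a^2}$. The initial point $x_0$ is drawn from the normal distribution on $\mathbb{R}^n$ (independently of $a$), and $x_{k+1}=x_k+t_kd_k$, $d_k=-\nabla f(x_k)$, where $t_k$ is returned by the following Armijo–Wolfe bracketing line search: set $\alpha=0$, $\beta=+\infty$, $t=1$; repeat: if $A(t)$ fails set $\beta\leftarrow t$; else if $W(t)$ fails set $\alpha\leftarrow t$; else stop and return $t$; then if $\beta<+\infty$ set $t\leftarrow(\alpha+\beta)/2$, otherwise $t\leftarrow2\alpha$. Here $A(t)$: $f(x_k+td_k)\le f(x_k)+c_1t\nabla f(x_k)^Td_k$, and $W(t)$: $f$ is differentiable at $x_k+td_k$ and $\nabla f(x_k+td_k)^Td_k\ge c_2\nabla f(x_k)^Td_k$. All statements are understood to hold with probability one. *)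

theory Defs
  imports "HOL-Probability.Probability"
begin

text \<open>The objective: coordinate i1 plays the role of the first coordinate.\<close>
definition fobj :: "real \<Rightarrow> 'n::finite \<Rightarrow> real ^ 'n \<Rightarrow> real" where
  "fobj a i1 x = a * \<bar>x $ i1\<bar> + (\<Sum>i\<in>UNIV - {i1}. x $ i)"

definition has_grad :: "(real ^ 'n::finite \<Rightarrow> real) \<Rightarrow> real ^ 'n \<Rightarrow> real ^ 'n \<Rightarrow> bool" where
  "has_grad f g x \<longleftrightarrow> (f has_derivative (\<lambda>h. g \<bullet> h)) (at x)"

definition grad :: "(real ^ 'n::finite \<Rightarrow> real) \<Rightarrow> real ^ 'n \<Rightarrow> real ^ 'n" where
  "grad f x = (THE g. has_grad f g x)"

definition armijo :: "(real ^ 'n::finite \<Rightarrow> real) \<Rightarrow> real \<Rightarrow> real ^ 'n \<Rightarrow> real ^ 'n \<Rightarrow> real \<Rightarrow> bool" where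
  "armijo f c1 x d t \<longleftrightarrow> f (x + t *\<^sub>R d) \<le> f x + c1 * t * (grad f x \<bullet> d)"

definition wolfe :: "(real ^ 'n::finite \<Rightarrow> real) \<Rightarrow> real \<Rightarrow> real ^ 'n \<Rightarrow> real ^ 'n \<Rightarrow> real \<Rightarrow> bool" where
  "wolfe f c2 x d t \<longleftrightarrow> (\<exists>g. has_grad f g (x + t *\<^sub>R d) \<and> g \<bullet> d \<ge> c2 * (grad f x \<bullet> d))"

text \<open>One pass of the bracketing loop on state (alpha, beta, t); beta = None encodes +infinity.
  Only used while the stopping test fails.\<close>
definition ls_step :: "(real ^ 'n::finite \<Rightarrow> real) \<Rightarrow> real \<Rightarrow> real \<Rightarrow> real ^ 'n \<Rightarrow> real ^ 'n
    \<Rightarrow> real \<times> real option \<times> real \<Rightarrow> real \<times> real option \<times> real" where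
  "ls_step f c1 c2 x d s =
     (case s of (\<alpha>, \<beta>, t) \<Rightarrow>
       (let (\<alpha>', \<beta>') = (if \<not> armijo f c1 x d t then (\<alpha>, Some t)
                         else if \<not> wolfe f c2 x d t then (t, \<beta>) else (\<alpha>, \<beta>))
        in (\<alpha>', \<beta>', (case \<beta>' of Some b \<Rightarrow> (\<alpha>' + b) / 2 | None \<Rightarrow> 2 * \<alpha>'))))"

definition ls_trial :: "(real ^ 'n::finite \<Rightarrow> real) \<Rightarrow> real \<Rightarrow> real \<Rightarrow> real ^ 'n \<Rightarrow> real ^ 'n \<Rightarrow> nat \<Rightarrow> real" where
  "ls_trial f c1 c2 x d j = snd (snd ((ls_step f c1 c2 x d ^^ j) (0, None, 1)))"

definition ls_returns :: "(real ^ 'n::finite \<Rightarrow> real) \<Rightarrow> real \<Rightarrow> real \<Rightarrow> real ^ 'n \<Rightarrow> real ^ 'n \<Rightarrow> real \<Rightarrow> bool" where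
  "ls_returns f c1 c2 x d t \<longleftrightarrow>
     (\<exists>j. ls_trial f c1 c2 x d j = t \<and> armijo f c1 x d t \<and> wolfe f c2 x d t \<and>
          (\<forall>i<j. \<not> (armijo f c1 x d (ls_trial f c1 c2 x d i) \<and> wolfe f c2 x d (ls_trial f c1 c2 x d i))))"

definition gd_upto :: "(real ^ 'n::finite \<Rightarrow> real) \<Rightarrow> real \<Rightarrow> real \<Rightarrow> real ^ 'n
    \<Rightarrow> (nat \<Rightarrow> real ^ 'n) \<Rightarrow> (nat \<Rightarrow> real) \<Rightarrow> nat \<Rightarrow> bool" where
  "gd_upto f c1 c2 x0 xs ts k \<longleftrightarrow> xs 0 = x0 \<and>
     (\<forall>j<k. f differentiable (at (xs j)) \<and>
            ls_returns f c1 c2 (xs j) (- grad f (xs j)) (ts j) \<and>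
            xs (Suc j) = xs j + ts j *\<^sub>R (- grad f (xs j)))"

definition std_gauss :: "(real ^ 'n::finite) measure" where
  "std_gauss = density lborel
     (\<lambda>x. ennreal ((2 * pi) powr (- real CARD('n) / 2) * exp (- (norm x)\<^sup>2 / 2)))"

end

(*
  Write u = x $ i1. Where u \<noteq> 0, f is linear near x with gradient (a sgn u, 1, ..., 1), so along
  the steepest-descent ray f is piecewise linear with a single kink at t = |u| / a. Before the
  kink the Armijo condition holds but the slope has not changed, so the Wolfe condition fails and
  the bracketing search keeps doubling t; between |u|/a and 2|u|/a the slope has become nonnegative
  (since a^2 \<ge> n - 1) and tau \<le> 0 gives Armijo, so the first doubled trial past the kink,
  2^r, is accepted. This fails only if some trial hits the kink exactly. Every trial step is
  rational, so every iterate has first coordinate x0 $ i1 + a q with q rational; hitting a kink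
  therefore confines x0 $ i1 to a countable set, which is Gaussian-null.
*)
theory Submission
  imports Defs
begin

definition fobj_grad :: "real \<Rightarrow> 'n::finite \<Rightarrow> real ^ 'n \<Rightarrow> real ^ 'n" where
  "fobj_grad a i1 p = (\<chi> i. if i = i1 then a * sgn (p $ i1) else 1)"

lemma inner_fobj_grad:
  "fobj_grad a i1 p \<bullet> v = a * sgn (p $ i1) * v $ i1 + (\<Sum>i\<in>UNIV - {i1}. v $ i)"
proof -
  have "fobj_grad a i1 p \<bullet> v = (\<Sum>i\<in>UNIV. fobj_grad a i1 p $ i * v $ i)"
    by (simp add: inner_vec_def)
  also have "\<dots> = fobj_grad a i1 p $ i1 * v $ i1 + (\<Sum>i\<in>UNIV - {i1}. fobj_grad a i1 p $ i * v $ i)"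
    by (simp add: sum.remove)
  also have "(\<Sum>i\<in>UNIV - {i1}. fobj_grad a i1 p $ i * v $ i) = (\<Sum>i\<in>UNIV - {i1}. v $ i)"
    by (rule sum.cong) (auto simp: fobj_grad_def)
  finally show ?thesis by (simp add: fobj_grad_def)
qed

lemma sum_other_coords_const: "(\<Sum>i\<in>UNIV - {i1::'n::finite}. c) = (real CARD('n) - 1) * c"
  by (simp add: card_Diff_singleton)

lemma inner_fobj_grad_fobj_grad:
  fixes p q :: "real ^ 'n::finite"
  shows "fobj_grad a i1 p \<bullet> fobj_grad a i1 q
     = a\<^sup>2 * sgn (p $ i1) * sgn (q $ i1) + (real CARD('n) - 1)"
  by (simp add: inner_fobj_grad sum_other_coords_const power2_eq_square)
    (simp add: fobj_grad_def)

lemma fobj_eq_inner_fobj_grad: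
  assumes "sgn (y $ i1) = sgn (p $ i1)"
  shows "fobj a i1 y = fobj_grad a i1 p \<bullet> y"
  using assms by (simp add: fobj_def inner_fobj_grad abs_sgn)

lemma has_grad_fobj:
  fixes p :: "real ^ 'n::finite"
  assumes "p $ i1 \<noteq> 0"
  shows "has_grad (fobj a i1) (fobj_grad a i1 p) p"
proof -
  define U where "U = {y :: real ^ 'n. 0 < sgn (p $ i1) * y $ i1}"
  have "open U"
    unfolding U_def by (rule open_Collect_less) (auto intro!: continuous_intros)
  moreover have "p \<in> U"
    using assms by (auto simp: U_def sgn_if)
  moreover have "fobj_grad a i1 p \<bullet> y = fobj a i1 y" if "y \<in> U" for y
    using that by (intro fobj_eq_inner_fobj_grad[symmetric]) (auto simp: U_def sgn_if split: if_splits)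
  moreover have "((\<lambda>y. fobj_grad a i1 p \<bullet> y) has_derivative (\<lambda>h. fobj_grad a i1 p \<bullet> h)) (at p)"
    by (auto intro!: derivative_eq_intros)
  ultimately show ?thesis
    unfolding has_grad_def by (metis has_derivative_transform_within_open)
qed

lemma has_grad_unique:
  assumes "has_grad f g p" and "has_grad f g' p"
  shows "g = g'"
proof -
  have "(\<lambda>h. g \<bullet> h) = (\<lambda>h. g' \<bullet> h)"
    using assms unfolding has_grad_def by (rule has_derivative_unique)
  then show ?thesis
    by (metis vector_eq_rdot)
qed

lemma grad_eqI: "has_grad f g p \<Longrightarrow> grad f p = g"
  unfolding grad_def using has_grad_unique by blast

lemma grad_fobj: "p $ i1 \<noteq> 0 \<Longrightarrow> grad (fobj a i1) p = fobj_grad a i1 p"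
  by (rule grad_eqI[OF has_grad_fobj])

lemma abs_kink_not_has_real_derivative:
  assumes "a > 0"
  shows "\<not> ((\<lambda>h. a * \<bar>h\<bar> + c) has_real_derivative D) (at 0)"
proof
  assume D: "((\<lambda>h. a * \<bar>h\<bar> + c) has_real_derivative D) (at 0)"
  have "D = 0"
    by (rule DERIV_local_min[OF D, of 1]) (use assms in auto)
  moreover have "D - a = 0"
    using DERIV_diff[OF D DERIV_cmult_Id[of a 0]]
    by (rule DERIV_local_min[of _ _ _ 1]) (use assms in \<open>auto simp: abs_if mult_le_0_iff\<close>)
  ultimately show False
    using assms by simp
qed

lemma not_differentiable_fobj:
  fixes p :: "real ^ 'n::finite"
  assumes "a > 0" and "p $ i1 = 0"
  shows "\<not> fobj a i1 differentiable (at p)"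
proof
  assume "fobj a i1 differentiable (at p)"
  moreover have "(\<lambda>h::real. p + h *\<^sub>R axis i1 1) differentiable (at 0)"
    by (auto intro!: derivative_intros)
  ultimately have "fobj a i1 \<circ> (\<lambda>h. p + h *\<^sub>R axis i1 1) differentiable (at 0)"
    by (metis (no_types, lifting) add.right_neutral differentiable_chain_at scale_zero_left)
  moreover have "fobj a i1 \<circ> (\<lambda>h. p + h *\<^sub>R axis i1 1) = (\<lambda>h. a * \<bar>h\<bar> + (\<Sum>i\<in>UNIV - {i1}. p $ i))"
    using assms(2) by (auto simp: fobj_def axis_def intro!: sum.cong)
  ultimately show False
    using abs_kink_not_has_real_derivative[OF assms(1)] by (metis real_differentiable_def)
qed

lemma fobj_descent_coord:
  assumes "x $ i1 \<noteq> 0"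
  shows "(x - t *\<^sub>R grad (fobj a i1) x) $ i1 = sgn (x $ i1) * (\<bar>x $ i1\<bar> - t * a)"
  using assms by (simp add: grad_fobj fobj_grad_def abs_sgn algebra_simps)

lemma fobj_along_descent:
  fixes x :: "real ^ 'n::finite"
  assumes "x $ i1 \<noteq> 0"
  shows "fobj a i1 (x - t *\<^sub>R grad (fobj a i1) x)
           = fobj a i1 x + a * (\<bar>\<bar>x $ i1\<bar> - t * a\<bar> - \<bar>x $ i1\<bar>) - t * (real CARD('n) - 1)"
proof -
  have "(\<Sum>i\<in>UNIV - {i1}. (x - t *\<^sub>R grad (fobj a i1) x) $ i) = (\<Sum>i\<in>UNIV - {i1}. x $ i - t)"
    using assms by (intro sum.cong) (auto simp: grad_fobj fobj_grad_def)
  moreover have "\<bar>(x - t *\<^sub>R grad (fobj a i1) x) $ i1\<bar> = \<bar>\<bar>x $ i1\<bar> - t * a\<bar>"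
    by (simp only: fobj_descent_coord[OF assms]) (simp add: abs_mult assms)
  ultimately show ?thesis
    unfolding fobj_def by (simp add: sum_subtractf sum_other_coords_const algebra_simps)
qed

lemma inner_grad_fobj_self:
  fixes x :: "real ^ 'n::finite"
  assumes "x $ i1 \<noteq> 0"
  shows "grad (fobj a i1) x \<bullet> grad (fobj a i1) x = a\<^sup>2 + (real CARD('n) - 1)"
  using assms by (simp add: grad_fobj inner_fobj_grad_fobj_grad)

lemma armijo_fobj_descent_iff:
  fixes x :: "real ^ 'n::finite"
  assumes "x $ i1 \<noteq> 0"
  shows "armijo (fobj a i1) c1 x (- grad (fobj a i1) x) t \<longleftrightarrow>
           a * (\<bar>\<bar>x $ i1\<bar> - t * a\<bar> - \<bar>x $ i1\<bar>) - t * (real CARD('n) - 1)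
             \<le> - c1 * t * (a\<^sup>2 + (real CARD('n) - 1))"
  using assms
  by (simp add: armijo_def fobj_along_descent inner_grad_fobj_self) (simp add: algebra_simps)

lemma wolfe_fobj_descent_iff:
  fixes x :: "real ^ 'n::finite"
  assumes "x $ i1 \<noteq> 0" and "t * a \<noteq> \<bar>x $ i1\<bar>"
  shows "wolfe (fobj a i1) c2 x (- grad (fobj a i1) x) t \<longleftrightarrow>
           a\<^sup>2 * sgn (\<bar>x $ i1\<bar> - t * a) + (real CARD('n) - 1) \<le> c2 * (a\<^sup>2 + (real CARD('n) - 1))"
proof -
  define y where "y = x - t *\<^sub>R grad (fobj a i1) x"
  have y: "y $ i1 = sgn (x $ i1) * (\<bar>x $ i1\<bar> - t * a)"
    unfolding y_def using assms(1) by (rule fobj_descent_coord)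
  then have "y $ i1 \<noteq> 0"
    using assms by (auto simp: sgn_0_0)
  then have "has_grad (fobj a i1) (fobj_grad a i1 y) y"
    by (rule has_grad_fobj)
  moreover have "x + t *\<^sub>R (- grad (fobj a i1) x) = y"
    by (simp add: y_def)
  ultimately have "wolfe (fobj a i1) c2 x (- grad (fobj a i1) x) t \<longleftrightarrow>
      fobj_grad a i1 y \<bullet> (- grad (fobj a i1) x) \<ge> c2 * (grad (fobj a i1) x \<bullet> (- grad (fobj a i1) x))"
    unfolding wolfe_def using has_grad_unique by metis
  moreover have "sgn (y $ i1) * sgn (x $ i1) = sgn (\<bar>x $ i1\<bar> - t * a)"
    using assms(1) by (simp add: y sgn_mult)
  ultimately show ?thesis
    using assms(1)
    by (simp add: grad_fobj inner_fobj_grad_fobj_grad mult.assoc) (auto simp: algebra_simps)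
qed

lemma fobj_armijo_not_wolfe_before_kink:
  fixes x :: "real ^ 'n::finite"
  assumes "a > 0" and "c1 < 1" and "c2 < 1" and "x $ i1 \<noteq> 0"
    and "0 \<le> t" and "t * a < \<bar>x $ i1\<bar>"
  shows "armijo (fobj a i1) c1 x (- grad (fobj a i1) x) t \<and>
         \<not> wolfe (fobj a i1) c2 x (- grad (fobj a i1) x) t"
proof -
  define K where "K = a\<^sup>2 + (real CARD('n) - 1)"
  have "K > 0"
    unfolding K_def using assms(1) by (simp add: add_pos_nonneg)
  have "a * (\<bar>\<bar>x $ i1\<bar> - t * a\<bar> - \<bar>x $ i1\<bar>) - t * (real CARD('n) - 1) = - t * K"
    using assms(6) by (simp add: K_def power2_eq_square algebra_simps)
  moreover have "- t * K \<le> - c1 * t * K"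
    using mult_left_le[of c1 "t * K"] assms(2,5) \<open>K > 0\<close> by (simp add: ac_simps)
  moreover have "\<not> a\<^sup>2 + (real CARD('n) - 1) \<le> c2 * K"
    using assms(3) \<open>K > 0\<close> by (simp add: K_def)
  ultimately show ?thesis
    using assms by (simp add: armijo_fobj_descent_iff wolfe_fobj_descent_iff K_def)
qed

lemma fobj_armijo_wolfe_past_kink:
  fixes x :: "real ^ 'n::finite"
  assumes "a > 0" and "0 < c1" and "c1 < c2"
    and "real CARD('n) - 1 \<le> a\<^sup>2"
    and "c1 * a\<^sup>2 + (real CARD('n) - 1) * (c1 - 1) \<le> 0"
    and "x $ i1 \<noteq> 0" and "\<bar>x $ i1\<bar> < t * a" and "t * a < 2 * \<bar>x $ i1\<bar>"
  shows "armijo (fobj a i1) c1 x (- grad (fobj a i1) x) t \<and>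
         wolfe (fobj a i1) c2 x (- grad (fobj a i1) x) t"
proof -
  define m where "m = real CARD('n) - 1"
  have "t > 0"
    using assms(1,7) by (smt (verit) zero_less_mult_pos2)
  have "t * a\<^sup>2 < 2 * a * \<bar>x $ i1\<bar>"
    using mult_strict_left_mono[OF assms(8) assms(1)] by (simp add: power2_eq_square algebra_simps)
  moreover have "c1 * t * a\<^sup>2 + c1 * t * m - t * m \<le> 0"
    using mult_nonneg_nonpos[OF less_imp_le[OF \<open>t > 0\<close>] assms(5)]
    by (simp add: m_def algebra_simps)
  ultimately have "a * (\<bar>\<bar>x $ i1\<bar> - t * a\<bar> - \<bar>x $ i1\<bar>) - t * m \<le> - c1 * t * (a\<^sup>2 + m)"
    using assms(7) by (simp add: power2_eq_square algebra_simps)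
  moreover have "0 \<le> c2 * (a\<^sup>2 + m)"
    using assms(2,3) by (simp add: m_def)
  then have "a\<^sup>2 * sgn (\<bar>x $ i1\<bar> - t * a) + m \<le> c2 * (a\<^sup>2 + m)"
    using assms(4,7) by (simp add: m_def)
  ultimately show ?thesis
    using assms by (simp add: armijo_fobj_descent_iff wolfe_fobj_descent_iff m_def)
qed

lemma ls_trial_doubling:
  assumes "\<forall>j<r. armijo f c1 x d (2 ^ j) \<and> \<not> wolfe f c2 x d (2 ^ j)" and "j \<le> r"
  shows "\<exists>\<alpha>. (ls_step f c1 c2 x d ^^ j) (0, None, 1) = (\<alpha>, None, 2 ^ j)"
  using assms(2)
proof (induction j)
  case 0
  then show ?case by simp
next
  case (Suc j)
  then obtain \<alpha> where "(ls_step f c1 c2 x d ^^ j) (0, None, 1) = (\<alpha>, None, 2 ^ j)"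
    by auto
  moreover have "armijo f c1 x d (2 ^ j) \<and> \<not> wolfe f c2 x d (2 ^ j)"
    using assms(1) Suc.prems by auto
  ultimately show ?case
    by (simp add: ls_step_def[of f c1 c2 x d "(\<alpha>, None, 2 ^ j)"])
qed

lemma ls_returns_doubling:
  assumes "\<forall>j<r. armijo f c1 x d (2 ^ j) \<and> \<not> wolfe f c2 x d (2 ^ j)"
    and "armijo f c1 x d (2 ^ r)" and "wolfe f c2 x d (2 ^ r)"
  shows "ls_returns f c1 c2 x d (2 ^ r)"
proof -
  have "ls_trial f c1 c2 x d j = 2 ^ j" if "j \<le> r" for j
    using ls_trial_doubling[OF assms(1) that] unfolding ls_trial_def by auto
  then show ?thesis
    unfolding ls_returns_def using assms by (intro exI[of _ r]) auto
qed

definition rational_state :: "real \<times> real option \<times> real \<Rightarrow> bool" where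
  "rational_state s \<longleftrightarrow> (case s of (\<alpha>, \<beta>, t) \<Rightarrow> \<alpha> \<in> \<rat> \<and> set_option \<beta> \<subseteq> \<rat> \<and> t \<in> \<rat>)"

lemma rational_state_ls_step: "rational_state s \<Longrightarrow> rational_state (ls_step f c1 c2 x d s)"
  by (cases s)
    (auto simp: rational_state_def ls_step_def Let_def split: option.splits intro!: Rats_add Rats_divide)

lemma ls_trial_rational: "ls_trial f c1 c2 x d j \<in> \<rat>"
proof -
  have "rational_state ((ls_step f c1 c2 x d ^^ j) (0, None, 1))"
    by (induction j) (simp_all add: rational_state_def[of "(0, None, 1)"] rational_state_ls_step)
  then show ?thesis
    unfolding ls_trial_def rational_state_def by (auto split: prod.splits)
qed

lemma powr_ceiling_log2_bounds:
  fixes q :: real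
  assumes "1 < q" and "q \<noteq> 2 powr \<lceil>log 2 q\<rceil>"
  shows "2 powr \<lceil>log 2 q\<rceil> = 2 ^ nat \<lceil>log 2 q\<rceil>"
    and "q < 2 ^ nat \<lceil>log 2 q\<rceil>"
    and "2 ^ nat \<lceil>log 2 q\<rceil> < 2 * q"
proof -
  have "log 2 q > 0"
    using assms(1) by simp
  then show pow: "2 powr \<lceil>log 2 q\<rceil> = 2 ^ nat \<lceil>log 2 q\<rceil>"
    by (simp add: powr_realpow[symmetric])
  have "q = 2 powr log 2 q"
    using assms(1) by simp
  also have "\<dots> \<le> 2 powr \<lceil>log 2 q\<rceil>"
    by simp
  finally show "q < 2 ^ nat \<lceil>log 2 q\<rceil>"
    using assms(2) pow by simp
  have "2 powr \<lceil>log 2 q\<rceil> < 2 powr (log 2 q + 1)"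
    using ceiling_correct[of "log 2 q"] by (intro powr_less_mono) linarith+
  also have "\<dots> = 2 * q"
    using assms(1) by (simp add: powr_add)
  finally show "2 ^ nat \<lceil>log 2 q\<rceil> < 2 * q"
    using pow by simp
qed

lemma ls_returns_fobj_descent:
  fixes x :: "real ^ 'n::finite"
  assumes "a > 0" and "0 < c1" and "c1 < c2" and "c2 < 1"
    and "real CARD('n) - 1 \<le> a\<^sup>2"
    and "c1 * a\<^sup>2 + (real CARD('n) - 1) * (c1 - 1) \<le> 0"
    and "\<bar>x $ i1\<bar> > a"
    and "\<bar>x $ i1\<bar> \<noteq> a * 2 powr \<lceil>log 2 (\<bar>x $ i1\<bar> / a)\<rceil>"
  shows "ls_returns (fobj a i1) c1 c2 x (- grad (fobj a i1) x)
           (2 powr \<lceil>log 2 (\<bar>x $ i1\<bar> / a)\<rceil>)"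
proof -
  define q where "q = \<bar>x $ i1\<bar> / a"
  define r where "r = nat \<lceil>log 2 q\<rceil>"
  have x: "x $ i1 \<noteq> 0" and q: "1 < q" "q \<noteq> 2 powr \<lceil>log 2 q\<rceil>"
    using assms(1,7,8) by (auto simp: q_def field_simps)
  note bounds = powr_ceiling_log2_bounds[OF q, folded r_def]
  have "\<forall>j<r. armijo (fobj a i1) c1 x (- grad (fobj a i1) x) (2 ^ j) \<and>
        \<not> wolfe (fobj a i1) c2 x (- grad (fobj a i1) x) (2 ^ j)"
  proof (intro allI impI fobj_armijo_not_wolfe_before_kink)
    fix j assume "j < r"
    have "2 * 2 ^ j \<le> (2::real) ^ r"
      using \<open>j < r\<close> by (metis Suc_leI power_Suc power_increasing one_le_numeral)
    then have "2 * 2 ^ j * a \<le> 2 ^ r * a"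
      using assms(1) by (intro mult_right_mono) auto
    moreover have "2 ^ r * a < 2 * \<bar>x $ i1\<bar>"
      using bounds(3) assms(1) by (simp add: q_def pos_less_divide_eq)
    ultimately show "2 ^ j * a < \<bar>x $ i1\<bar>"
      by simp
  qed (use assms x in auto)
  moreover have "armijo (fobj a i1) c1 x (- grad (fobj a i1) x) (2 ^ r) \<and>
        wolfe (fobj a i1) c2 x (- grad (fobj a i1) x) (2 ^ r)"
    using bounds(2,3) assms(1) 
    by (intro fobj_armijo_wolfe_past_kink)
      (use assms x in \<open>auto simp: q_def pos_divide_less_eq pos_less_divide_eq\<close>)
  ultimately show ?thesis
    using ls_returns_doubling bounds(1) by (simp add: q_def) blast
qed

lemma gd_upto_coord_rational:
  fixes x0 :: "real ^ 'n::finite"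
  assumes "a > 0" and "gd_upto (fobj a i1) c1 c2 x0 xs ts k" and "j \<le> k"
  shows "\<exists>q\<in>\<rat>. xs j $ i1 = x0 $ i1 + a * q"
  using assms(3)
proof (induction j)
  case 0
  then show ?case
    using assms(2) unfolding gd_upto_def by (auto intro!: bexI[of _ 0])
next
  case (Suc j)
  then obtain q where q: "q \<in> \<rat>" "xs j $ i1 = x0 $ i1 + a * q"
    by auto
  have "fobj a i1 differentiable (at (xs j))"
    and "ls_returns (fobj a i1) c1 c2 (xs j) (- grad (fobj a i1) (xs j)) (ts j)"
    and step: "xs (Suc j) = xs j + ts j *\<^sub>R (- grad (fobj a i1) (xs j))"
    using assms(2) Suc.prems unfolding gd_upto_def by auto
  then have "xs j $ i1 \<noteq> 0" and "ts j \<in> \<rat>"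
    using not_differentiable_fobj[OF assms(1)] ls_trial_rational
    unfolding ls_returns_def by metis+
  moreover have "sgn (xs j $ i1) \<in> \<rat>"
    by (simp add: sgn_if)
  ultimately have "q - ts j * sgn (xs j $ i1) \<in> \<rat>"
    using q(1) by (intro Rats_diff Rats_mult)
  moreover have "xs (Suc j) $ i1 = xs j $ i1 - ts j * (a * sgn (xs j $ i1))"
    using step \<open>xs j $ i1 \<noteq> 0\<close> by (simp add: grad_fobj fobj_grad_def)
  then have "xs (Suc j) $ i1 = x0 $ i1 + a * (q - ts j * sgn (xs j $ i1))"
    using q(2) by (simp add: algebra_simps)
  ultimately show ?case
    by blast
qed

lemma countable_abs_preimage:
  fixes S :: "real set"
  assumes "countable S"
  shows "countable {v. \<bar>v\<bar> \<in> S}"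
proof -
  have "{v. \<bar>v\<bar> \<in> S} \<subseteq> S \<union> uminus ` S"
    by (auto simp: abs_if image_iff) (metis minus_minus)
  then show ?thesis
    by (rule countable_subset) (use assms in simp)
qed

lemma AE_std_gauss_coord_notin_countable:
  fixes i :: "'n::finite"
  assumes "countable C"
  shows "AE x in std_gauss. x $ i \<notin> C"
proof -
  define N where "N = (\<Union>c\<in>C. {x :: real ^ 'n. x $ i = c})"
  have "negligible {x :: real ^ 'n. x \<bullet> axis i 1 = c}" for c
    by (rule negligible_standard_hyperplane) simp
  then have "negligible {x :: real ^ 'n. x $ i = c}" for c
    by (simp add: cart_eq_inner_axis)
  then have "negligible N"
    unfolding N_def using assms by (intro negligible_countable_Union) auto
  then have "AE x in lebesgue. x \<notin> N"
    by (intro AE_I'[of N]) (auto simp: negligible_iff_null_sets)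
  then have "AE x in lborel. x \<notin> N"
    by (simp add: AE_completion_iff)
  then show ?thesis
    unfolding std_gauss_def N_def by (subst AE_density) (auto elim: AE_mp)
qed

theorem lemma3:
  fixes a c1 c2 :: real and i1 :: "'n::finite"
  assumes "CARD('n) \<ge> 2"
    and "a \<ge> sqrt (real CARD('n) - 1)"
    and "0 < c1" and "c1 < c2" and "c2 < 1"
    and "c1 + (real CARD('n) - 1) * (c1 - 1) / a\<^sup>2 \<le> 0"
  shows "AE x0 in std_gauss.
           \<forall>k xs ts. gd_upto (fobj a i1) c1 c2 x0 xs ts k \<and> \<bar>xs k $ i1\<bar> > a \<longrightarrow>
             ls_returns (fobj a i1) c1 c2 (xs k) (- grad (fobj a i1) (xs k))
               (2 powr real_of_int \<lceil>log 2 (\<bar>xs k $ i1\<bar> / a)\<rceil>)"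
proof -
  have "1 \<le> sqrt (real CARD('n) - 1)"
    using assms(1) by simp
  then have a: "a > 0"
    using assms(2) by linarith
  have am: "real CARD('n) - 1 \<le> a\<^sup>2"
    using assms(2) by (rule sqrt_le_D)
  have tau: "c1 * a\<^sup>2 + (real CARD('n) - 1) * (c1 - 1) \<le> 0"
    using assms(6) a by (simp add: field_simps)
  \<comment> \<open>the values of u for which some trial step 2^j lands exactly on the kink\<close>
  define kinks where "kinks = {v. \<bar>v\<bar> \<in> range (\<lambda>m::int. a * 2 powr m)}"
  define C where "C = (\<lambda>(v, q). v - a * q) ` (kinks \<times> \<rat>)"
  have "countable C"
    unfolding C_def kinks_def by (intro countable_image countable_SIGMA countable_abs_preimage)
      (auto simp: countable_rat)
  then show ?thesis
  proof (rule AE_std_gauss_coord_notin_countable[THEN AE_mp], intro AE_I2 impI allI, elim conjE)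
    fix x0 :: "real ^ 'n" and k xs ts
    assume x0: "x0 $ i1 \<notin> C" and gd: "gd_upto (fobj a i1) c1 c2 x0 xs ts k"
      and big: "\<bar>xs k $ i1\<bar> > a"
    obtain q where "q \<in> \<rat>" and "xs k $ i1 = x0 $ i1 + a * q"
      using gd_upto_coord_rational[OF a gd order_refl] by blast
    then have "xs k $ i1 \<notin> kinks"
      using x0 unfolding C_def by (auto intro!: image_eqI[of _ _ "(xs k $ i1, q)"])
    then have "\<bar>xs k $ i1\<bar> \<noteq> a * 2 powr \<lceil>log 2 (\<bar>xs k $ i1\<bar> / a)\<rceil>"
      unfolding kinks_def by auto
    then show "ls_returns (fobj a i1) c1 c2 (xs k) (- grad (fobj a i1) (xs k))
                 (2 powr \<lceil>log 2 (\<bar>xs k $ i1\<bar> / a)\<rceil>)"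
      using ls_returns_fobj_descent[OF a assms(3-5) am tau big] by blast
  qed
qed

end
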